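(* Let $(x,q)\in\mathbf J$ with $q$ not an integer, and assume the greedy expansion $(b_i(x,q))$ is infinite (has infinitely many nonzero digits). If $(y_n,r_n)$ is any sequence in $\mathbf J$ converging to $(x,q)$, then both $(a_i(y_n,r_n))_{i\ge1}$ and $(b_i(y_n,r_n))_{i\ge1}$ converge coordinate-wise to $(b_i(x,q))_{i\ge1}=(a_i(x,q))_{i\ge1}$.
   Context: For real $q>1$ let $\lceil q\rceil$ be the smallest integer $\ge q$ and $A_q=\{0,\ldots,\lceil q\rceil-1\}$. Let $\mathbf J$ be the set of $(x,q)$ with $q>1$ and $x\in J_q:=[0,(\lceil q\rceil-1)/(q-1)]$. For $(x,q)\in\mathbf J$: the quasi-greedy expansion $(a_i(x,q))$ is $0^\infty$ if $x=0$, and for $x>0$, recursively $a_n(x,q)$ is the largest element of $A_q$ with $\sum_{i=1}^n a_i(x,q)q^{-i}<x$; the greedy expansion $(b_i(x,q))$ is defined recursively with $b_n(x,q)$ the largest element of $A_q$ with $\sum_{i=1}^n b_i(x,q)q^{-i}\le x$. *)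

theory Defs
  imports "HOL-Analysis.Analysis"
begin

definition alph :: "real \<Rightarrow> nat set" where
  "alph q = {d. d < nat \<lceil>q\<rceil>}"

definition Jset :: "(real \<times> real) set" where
  "Jset = {(x, q). q > 1 \<and> 0 \<le> x \<and> x \<le> (real_of_int \<lceil>q\<rceil> - 1) / (q - 1)}"

fun greedy_list :: "real \<Rightarrow> real \<Rightarrow> nat \<Rightarrow> nat list" where
  "greedy_list x q 0 = []"
| "greedy_list x q (Suc n) =
     (let ds = greedy_list x q n;
          s = (\<Sum>i<n. real (ds ! i) / q ^ (Suc i))
      in ds @ [GREATEST d. d \<in> alph q \<and> s + real d / q ^ (Suc n) \<le> x])"

fun qgreedy_list :: "real \<Rightarrow> real \<Rightarrow> nat \<Rightarrow> nat list" where
  "qgreedy_list x q 0 = []"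
| "qgreedy_list x q (Suc n) =
     (let ds = qgreedy_list x q n;
          s = (\<Sum>i<n. real (ds ! i) / q ^ (Suc i))
      in ds @ [GREATEST d. d \<in> alph q \<and> s + real d / q ^ (Suc n) < x])"

text \<open>Greedy digit b_n(x,q), for n \<ge> 1 (the value at index 0 is irrelevant).\<close>
definition bdig :: "real \<Rightarrow> real \<Rightarrow> nat \<Rightarrow> nat" where
  "bdig x q n = (if n = 0 then 0 else greedy_list x q n ! (n - 1))"

definition adig :: "real \<Rightarrow> real \<Rightarrow> nat \<Rightarrow> nat" where
  "adig x q n = (if n = 0 \<or> x = 0 then 0 else qgreedy_list x q n ! (n - 1))"

end

theory Submission
  imports Defs
begin

text \<open>Let \<open>S n\<close> be the value of the first \<open>n\<close> greedy digits of \<open>(x, q)\<close>. Always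
  \<open>S n \<le> x\<close>, and once \<open>S n = x\<close> all later greedy digits vanish; so an infinite greedy expansion
  has \<open>S n < x\<close> for all \<open>n\<close>. The digit \<open>d = b (n+1)\<close> is then pinned down by two strict
  inequalities, \<open>S n + d / q^(n+1) < x\<close> and either \<open>d + 1 = \<lceil>q\<rceil>\<close> or
  \<open>x < S n + (d + 1) / q^(n+1)\<close>, under which the greedy rule (\<open>\<le>\<close>) and the quasi-greedy
  rule (\<open><\<close>) choose the same digit. Strict inequalities survive small perturbations of
  \<open>(x, q)\<close>, and because \<open>q\<close> is not an integer so does the alphabet; by induction on \<open>n\<close>
  both expansions of all nearby points start with the first \<open>n\<close> digits of \<open>b(x, q)\<close>.\<close>

definition digits_value :: "(nat \<Rightarrow> nat) \<Rightarrow> real \<Rightarrow> nat \<Rightarrow> real" where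
  "digits_value ds q n = (\<Sum>i<n. real (ds (Suc i)) / q ^ Suc i)"

lemma digits_value_Suc:
  "digits_value ds q (Suc n) = digits_value ds q n + real (ds (Suc n)) / q ^ Suc n"
  by (simp add: digits_value_def)

lemma digits_value_cong:
  "(\<And>i. i < n \<Longrightarrow> ds (Suc i) = es (Suc i)) \<Longrightarrow> digits_value ds q n = digits_value es q n"
  unfolding digits_value_def by (rule sum.cong) simp_all

lemma greedy_list_length [simp]: "length (greedy_list x q n) = n"
  by (induction n) (simp_all add: Let_def)

lemma qgreedy_list_length [simp]: "length (qgreedy_list x q n) = n"
  by (induction n) (simp_all add: Let_def)

lemma nth_greedy_list: "i < n \<Longrightarrow> greedy_list x q n ! i = bdig x q (Suc i)"
  by (induction n) (auto simp: bdig_def Let_def nth_append less_Suc_eq)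

lemma nth_qgreedy_list: "x \<noteq> 0 \<Longrightarrow> i < n \<Longrightarrow> qgreedy_list x q n ! i = adig x q (Suc i)"
  by (induction n) (auto simp: adig_def Let_def nth_append less_Suc_eq)

lemma bdig_Suc:
  "bdig x q (Suc n) =
     (GREATEST d. d < nat \<lceil>q\<rceil> \<and> digits_value (bdig x q) q n + real d / q ^ Suc n \<le> x)"
proof -
  have "(\<Sum>i<n. real (greedy_list x q n ! i) / q ^ Suc i) = digits_value (bdig x q) q n"
    unfolding digits_value_def by (rule sum.cong) (simp_all add: nth_greedy_list)
  then show ?thesis by (simp add: bdig_def Let_def nth_append alph_def)
qed

lemma adig_Suc:
  assumes "x \<noteq> 0"
  shows "adig x q (Suc n) =
     (GREATEST d. d < nat \<lceil>q\<rceil> \<and> digits_value (adig x q) q n + real d / q ^ Suc n < x)"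
proof -
  have "(\<Sum>i<n. real (qgreedy_list x q n ! i) / q ^ Suc i) = digits_value (adig x q) q n"
    unfolding digits_value_def by (rule sum.cong) (simp_all add: nth_qgreedy_list assms)
  then show ?thesis using assms by (simp add: adig_def Let_def nth_append alph_def)
qed

lemma Greatest_downward_closed_eqI:
  fixes P :: "nat \<Rightarrow> bool"
  assumes "d < M" "P d" "Suc d = M \<or> \<not> P (Suc d)"
    and downward_closed: "\<And>a b. a \<le> b \<Longrightarrow> P b \<Longrightarrow> P a"
  shows "(GREATEST e. e < M \<and> P e) = d"
proof (rule Greatest_equality)
  show "d < M \<and> P d" using assms by simp
next
  fix e assume e: "e < M \<and> P e"
  show "e \<le> d"
  proof (rule ccontr)
    assume "\<not> e \<le> d"
    then have "Suc d < M" "P (Suc d)" using e downward_closed[of "Suc d" e] by auto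
    with assms(3) show False by simp
  qed
qed

lemma greatest_digit_eq:
  fixes T y r :: real
  assumes "r > 0" "d < M" "T + real d / r ^ m < y" "Suc d = M \<or> y < T + real (Suc d) / r ^ m"
  shows "(GREATEST e. e < M \<and> T + real e / r ^ m \<le> y) = d"
    and "(GREATEST e. e < M \<and> T + real e / r ^ m < y) = d"
proof -
  have mono: "real a / r ^ m \<le> real b / r ^ m" if "a \<le> b" for a b
    using that assms(1) by (intro divide_right_mono) auto
  show "(GREATEST e. e < M \<and> T + real e / r ^ m \<le> y) = d"
  proof (rule Greatest_downward_closed_eqI)
    fix a b :: nat assume "a \<le> b" "T + real b / r ^ m \<le> y"
    then show "T + real a / r ^ m \<le> y" using mono[of a b] by linarith
  qed (use assms in auto)
  show "(GREATEST e. e < M \<and> T + real e / r ^ m < y) = d"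
  proof (rule Greatest_downward_closed_eqI)
    fix a b :: nat assume "a \<le> b" "T + real b / r ^ m < y"
    then show "T + real a / r ^ m < y" using mono[of a b] by linarith
  qed (use assms in auto)
qed

lemma bdig_Suc_greedy:
  assumes "q > 1" "digits_value (bdig x q) q n \<le> x"
  defines "S \<equiv> digits_value (bdig x q) q n" and "b \<equiv> bdig x q (Suc n)"
  shows "b < nat \<lceil>q\<rceil>" "S + real b / q ^ Suc n \<le> x"
    and "Suc b = nat \<lceil>q\<rceil> \<or> x < S + real (Suc b) / q ^ Suc n"
proof -
  let ?P = "\<lambda>d. d < nat \<lceil>q\<rceil> \<and> S + real d / q ^ Suc n \<le> x"
  have b: "b = (GREATEST d. ?P d)" unfolding b_def S_def by (rule bdig_Suc)
  have "?P 0" using assms(1,2) by (simp add: S_def)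
  moreover have bound: "?P d \<Longrightarrow> d \<le> nat \<lceil>q\<rceil>" for d by simp
  ultimately have "?P b" unfolding b by (rule GreatestI_nat)
  then show "b < nat \<lceil>q\<rceil>" "S + real b / q ^ Suc n \<le> x" by simp_all
  show "Suc b = nat \<lceil>q\<rceil> \<or> x < S + real (Suc b) / q ^ Suc n"
  proof (rule ccontr)
    assume "\<not> ?thesis"
    with \<open>?P b\<close> have "?P (Suc b)" by auto
    then have "Suc b \<le> b" unfolding b by (rule Greatest_le_nat) (rule bound)
    then show False by simp
  qed
qed

lemma digits_value_bdig_le:
  assumes "q > 1" "x \<ge> 0"
  shows "digits_value (bdig x q) q n \<le> x"
proof (induction n)
  case 0 then show ?case using assms by (simp add: digits_value_def)
next
  case (Suc n) then show ?case using bdig_Suc_greedy(2)[OF assms(1)] by (simp add: digits_value_Suc)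
qed

lemma bdig_eq_0_after_exact:
  assumes "q > 1" "digits_value (bdig x q) q n = x"
  shows "bdig x q (Suc (n + j)) = 0 \<and> digits_value (bdig x q) q (n + j) = x"
proof (induction j)
  case 0
  have "real (bdig x q (Suc n)) / q ^ Suc n \<le> 0"
    using bdig_Suc_greedy(2)[of q x n] assms by simp
  moreover have "q ^ Suc n > 0" using assms(1) by simp
  ultimately show ?case using assms by (simp add: divide_le_0_iff del: power_Suc)
next
  case (Suc j)
  then have exact: "digits_value (bdig x q) q (n + Suc j) = x" by (simp add: digits_value_Suc)
  then have "real (bdig x q (Suc (n + Suc j))) / q ^ Suc (n + Suc j) \<le> 0"
    using bdig_Suc_greedy(2)[of q x "n + Suc j"] assms(1) by simp
  moreover have "q ^ Suc (n + Suc j) > 0" using assms(1) by simp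
  ultimately show ?case using exact by (simp add: divide_le_0_iff del: power_Suc)
qed

lemma digits_value_bdig_less:
  assumes "q > 1" "x \<ge> 0" and infinite: "infinite {i. i \<ge> 1 \<and> bdig x q i \<noteq> 0}"
  shows "digits_value (bdig x q) q n < x"
proof (rule ccontr)
  assume "\<not> ?thesis"
  then have exact: "digits_value (bdig x q) q n = x"
    using digits_value_bdig_le[OF assms(1,2)] by (simp add: not_less order_antisym)
  have "{i. i \<ge> 1 \<and> bdig x q i \<noteq> 0} \<subseteq> {..n}"
  proof (rule subsetI, rule ccontr)
    fix i assume "i \<in> {i. i \<ge> 1 \<and> bdig x q i \<noteq> 0}" "i \<notin> {..n}"
    moreover have "i = Suc (n + (i - Suc n))" using \<open>i \<notin> {..n}\<close> by simp
    ultimately show False using bdig_eq_0_after_exact[OF assms(1) exact, of "i - Suc n"] by simp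
  qed
  with infinite show False using finite_subset by blast
qed

lemma eventually_ceiling_eq:
  fixes q :: real
  assumes "q \<notin> \<int>" "r \<longlonglongrightarrow> q"
  shows "eventually (\<lambda>k. \<lceil>r k\<rceil> = \<lceil>q\<rceil>) sequentially"
proof -
  have "q < of_int \<lceil>q\<rceil>" using assms(1) le_of_int_ceiling[of q] by (metis Ints_of_int order_le_less)
  moreover have "of_int \<lceil>q\<rceil> - 1 < q" using ceiling_correct[of q] by linarith
  ultimately have "eventually (\<lambda>k. of_int \<lceil>q\<rceil> - 1 < r k \<and> r k < of_int \<lceil>q\<rceil>) sequentially"
    using assms(2) by (intro eventually_conj order_tendstoD)
  then show ?thesis by eventually_elim (intro ceiling_unique, auto)
qed

lemma eventually_digits_agree:
  fixes x q :: real and y r :: "nat \<Rightarrow> real"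
  assumes q: "q > 1" "q \<notin> \<int>" and "x \<ge> 0"
    and infinite: "infinite {i. i \<ge> 1 \<and> bdig x q i \<noteq> 0}"
    and y: "y \<longlonglongrightarrow> x" and r: "r \<longlonglongrightarrow> q"
  shows "eventually (\<lambda>k. \<forall>i<n. adig (y k) (r k) (Suc i) = bdig x q (Suc i)
          \<and> bdig (y k) (r k) (Suc i) = bdig x q (Suc i)) sequentially"
proof (induction n)
  case 0 then show ?case by simp
next
  case (Suc n)
  define M where "M = nat \<lceil>q\<rceil>"
  define d where "d = bdig x q (Suc n)"
  define T where "T k = digits_value (bdig x q) (r k) n" for k
  let ?S = "digits_value (bdig x q) q n"
  have less: "digits_value (bdig x q) q m < x" for m
    using digits_value_bdig_less[OF q(1) assms(3) infinite] .
  have "x > 0" using less[of 0] by (simp add: digits_value_def)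
  have lower: "?S + real d / q ^ Suc n < x" using less[of "Suc n"] by (simp add: digits_value_Suc d_def)
  have "d < M" and upper: "Suc d = M \<or> x < ?S + real (Suc d) / q ^ Suc n"
    using bdig_Suc_greedy[OF q(1) less_imp_le[OF less]] by (simp_all add: d_def M_def)
  have T: "(\<lambda>k. T k + real e / r k ^ Suc n) \<longlonglongrightarrow> ?S + real e / q ^ Suc n" for e
    unfolding T_def digits_value_def by (intro tendsto_intros r) (use q in auto)
  have ev_lower: "eventually (\<lambda>k. T k + real d / r k ^ Suc n < y k) sequentially"
    using lower order_tendstoD(1)[OF tendsto_diff[OF y T], of 0 d] by (auto elim: eventually_mono)
  have ev_upper: "eventually (\<lambda>k. Suc d = M \<or> y k < T k + real (Suc d) / r k ^ Suc n) sequentially"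
    using upper order_tendstoD(1)[OF tendsto_diff[OF T y], of 0 "Suc d"] by (auto elim: eventually_mono)
  have ev_ceiling: "eventually (\<lambda>k. nat \<lceil>r k\<rceil> = M) sequentially"
    using eventually_ceiling_eq[OF q(2) r] by eventually_elim (simp add: M_def)
  have ev_pos: "eventually (\<lambda>k. y k > 0 \<and> r k > 0) sequentially"
    using \<open>x > 0\<close> q(1) by (intro eventually_conj order_tendstoD(1)[OF y] order_tendstoD(1)[OF r]) simp_all
  from Suc.IH ev_lower ev_upper ev_ceiling ev_pos show ?case
  proof eventually_elim
    case (elim k)
    have "digits_value (bdig (y k) (r k)) (r k) n = T k"
      and "digits_value (adig (y k) (r k)) (r k) n = T k"
      using elim(1) unfolding T_def by (auto intro: digits_value_cong)
    then have "bdig (y k) (r k) (Suc n) = (GREATEST e. e < M \<and> T k + real e / r k ^ Suc n \<le> y k)"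
      and "adig (y k) (r k) (Suc n) = (GREATEST e. e < M \<and> T k + real e / r k ^ Suc n < y k)"
      using bdig_Suc[of "y k" "r k" n] adig_Suc[of "y k" "r k" n] elim(4,5) by simp_all
    then have "bdig (y k) (r k) (Suc n) = d" "adig (y k) (r k) (Suc n) = d"
      using elim greatest_digit_eq[of "r k" d M "T k" "Suc n" "y k"] \<open>d < M\<close> by simp_all
    then show ?case using elim(1) by (auto simp: less_Suc_eq d_def)
  qed
qed

lemma eventually_adig_bdig_eq:
  fixes x q :: real and y r :: "nat \<Rightarrow> real"
  assumes "q > 1" "q \<notin> \<int>" "x \<ge> 0" "infinite {i. i \<ge> 1 \<and> bdig x q i \<noteq> 0}"
    and "y \<longlonglongrightarrow> x" "r \<longlonglongrightarrow> q" "i \<ge> 1"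
  shows "eventually (\<lambda>k. adig (y k) (r k) i = bdig x q i) sequentially"
    and "eventually (\<lambda>k. bdig (y k) (r k) i = bdig x q i) sequentially"
proof -
  obtain j where "i = Suc j" using \<open>i \<ge> 1\<close> by (cases i) auto
  with eventually_digits_agree[OF assms(1-6), of i]
  show "eventually (\<lambda>k. adig (y k) (r k) i = bdig x q i) sequentially"
    and "eventually (\<lambda>k. bdig (y k) (r k) i = bdig x q i) sequentially"
    by (auto elim: eventually_mono)
qed

theorem proposition2p6:
  fixes x q :: real and y r :: "nat \<Rightarrow> real"
  assumes "(x, q) \<in> Jset"
    and "q \<notin> \<int>"
    and "infinite {i. i \<ge> 1 \<and> bdig x q i \<noteq> 0}"
    and "\<And>n. (y n, r n) \<in> Jset"
    and "(\<lambda>n. (y n, r n)) \<longlonglongrightarrow> (x, q)"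
  shows "(\<forall>i\<ge>1. bdig x q i = adig x q i)
    \<and> (\<forall>i\<ge>1. (\<lambda>n. adig (y n) (r n) i) \<longlonglongrightarrow> bdig x q i)
    \<and> (\<forall>i\<ge>1. (\<lambda>n. bdig (y n) (r n) i) \<longlonglongrightarrow> bdig x q i)"
proof -
  have q: "q > 1" and x: "x \<ge> 0" using assms(1) by (auto simp: Jset_def)
  have y: "y \<longlonglongrightarrow> x" and r: "r \<longlonglongrightarrow> q"
    using tendsto_fst[OF assms(5)] tendsto_snd[OF assms(5)] by simp_all
  note agree = eventually_adig_bdig_eq[OF q assms(2) x assms(3)]
  \<comment> \<open>Taking for \<open>(y, r)\<close> the constant sequence \<open>(x, q)\<close> gives \<open>b = a\<close>.\<close>
  have "bdig x q i = adig x q i" if "i \<ge> 1" for i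
    using agree(1)[OF tendsto_const tendsto_const that] by simp
  moreover have "(\<lambda>n. adig (y n) (r n) i) \<longlonglongrightarrow> bdig x q i"
    and "(\<lambda>n. bdig (y n) (r n) i) \<longlonglongrightarrow> bdig x q i" if "i \<ge> 1" for i
    using agree[OF y r that] by (simp_all add: tendsto_eventually)
  ultimately show ?thesis by blast
qed

end
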